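(* There are absolute constants $\varepsilon_0\in(0,1)$ and $C>0$ such that the following holds. Let $d\ge2$, $x_0\ge3$, $f\in\mathcal{M}(x_0;d)$ and $1\le x\le x_0$, and for $1\le j\le d-1$ put $\sigma_j := \sum_{p\le x,\ f(p)=e(j/d)} \frac1p$. Let $\varepsilon\in(0,\varepsilon_0)$ with $\varepsilon P^-(d) > 1$, and assume $\sigma_m < \varepsilon \sum_{1 \leq j \leq d-1} \sigma_j$ for all $1 \leq m \leq d-1$. Then the number of $1\le\ell\le d-1$ for which $$\mathbb{D}(f^{\ell},1;x)^2 < \Big(\frac{2}{3} - C\varepsilon^{1/3}\Big) \sum_{1 \leq j \leq d-1} \sigma_j$$ is at most $C\varepsilon^{1/3} d$.
   Context: Sums over $p$ are over primes; $e(t):=e^{2\pi i t}$; $P^-(d)$ is the smallest prime factor of $d$; $\mu_d$ is the set of complex $d$-th roots of unity. For $g,h:\mathbb{N}\to\{|z|\le1\}$ and $x\ge2$, $\mathbb{D}(g,h;x):=\big(\sum_{p\le x}\frac{1-\mathrm{Re}(g(p)\overline{h(p)})}{p}\big)^{1/2}$, and $1$ denotes the constant function $1$. For $d\in\mathbb{N}$ and $x_0\ge1$, $\mathcal{M}(x_0;d)$ is the set of completely multiplicative functions $f:\mathbb{N}\to\mu_d\cup\{0\}$ such that for every $x\ge x_0$, $\max_{\alpha\in\mu_d}|\{n\le x: f(n)=\alpha\}|\le \frac{100x}{d}\prod_{p\le x,\ f(p)=0}(1-\frac1p)$. *)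

theory Defs
  imports "HOL-Analysis.Analysis" "HOL-Computational_Algebra.Primes"
begin

definition e :: "real \<Rightarrow> complex" where
  "e t = exp (2 * pi * \<i> * complex_of_real t)"

definition roots_of_unity :: "nat \<Rightarrow> complex set" where
  "roots_of_unity d = {z. z ^ d = 1}"

definition least_prime_factor :: "nat \<Rightarrow> nat" where
  "least_prime_factor d = Min (prime_factors d)"

definition completely_multiplicative :: "(nat \<Rightarrow> complex) \<Rightarrow> bool" where
  "completely_multiplicative f \<longleftrightarrow>
     f 1 = 1 \<and> (\<forall>m n. m > 0 \<longrightarrow> n > 0 \<longrightarrow> f (m * n) = f m * f n)"

definition pdist :: "(nat \<Rightarrow> complex) \<Rightarrow> (nat \<Rightarrow> complex) \<Rightarrow> real \<Rightarrow> real" where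
  "pdist g h x = sqrt (\<Sum>p\<in>{p. prime p \<and> real p \<le> x}.
       (1 - Re (g p * cnj (h p))) / real p)"

definition classM :: "real \<Rightarrow> nat \<Rightarrow> (nat \<Rightarrow> complex) set" where
  "classM x0 d = {f. completely_multiplicative f \<and>
     (\<forall>n>0. f n \<in> roots_of_unity d \<union> {0}) \<and>
     (\<forall>x\<ge>x0. \<forall>\<alpha>\<in>roots_of_unity d.
        real (card {n. 1 \<le> n \<and> real n \<le> x \<and> f n = \<alpha>})
          \<le> 100 * x / real d *
             (\<Prod>p\<in>{p. prime p \<and> real p \<le> x \<and> f p = 0}. 1 - 1 / real p))}"

end

theory Submission
  imports Defs
begin

(* Let sigma_j be the sum of 1/p over the primes p <= x with f(p) = e(j/d), and T = sum of the
   sigma_j.  Counting only those primes, D(f^l, 1; x)^2 >= T - Re S(l) with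
   S(l) = sum_j sigma_j e(jl/d), so each l with D(f^l, 1; x)^2 < 2T/3 has |S(l)| > T/3.
   By Parseval on Z/dZ, sum_{l<d} |S(l)|^2 = d * sum_j sigma_j^2 <= eps d T^2, hence there are
   at most 9 eps d <= 9 eps^(1/3) d such l.  So C = 9 and eps0 = 1/2 work. *)

lemma e_add: "e (a + b) = e a * e b"
  unfolding e_def by (simp add: exp_add[symmetric] algebra_simps)

lemma e_power: "e t ^ n = e (real n * t)"
  unfolding e_def by (simp add: exp_of_nat_mult[symmetric] algebra_simps)

lemma cnj_e: "cnj (e t) = e (- t)"
  unfolding e_def by (simp add: exp_cnj)

lemma e_eq_1_iff: "e t = 1 \<longleftrightarrow> t \<in> \<int>"
proof -
  have "e t = 1 \<longleftrightarrow> (\<exists>n::int. t = of_int n)"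
    unfolding e_def exp_eq_1 using pi_gt_zero by (simp add: mult_ac)
  then show ?thesis by (metis Ints_cases Ints_of_int)
qed

lemma e_eq_iff: "e a = e b \<longleftrightarrow> a - b \<in> \<int>"
proof -
  have "e a = e (a - b) * e b" by (simp flip: e_add)
  moreover have "e b \<noteq> 0" unfolding e_def by simp
  ultimately show ?thesis by (metis e_eq_1_iff mult_cancel_right2)
qed

lemma inj_on_e_divide: "inj_on (\<lambda>j. e (real j / real d)) {..<d}"
proof (rule inj_onI)
  fix j k assume jk: "j \<in> {..<d}" "k \<in> {..<d}" and "e (real j / real d) = e (real k / real d)"
  then have "(real j - real k) / real d \<in> \<int>"
    by (simp add: e_eq_iff diff_divide_distrib)
  moreover have "\<bar>(real j - real k) / real d\<bar> < 1"
    using jk by (simp add: abs_divide)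
  ultimately have "(real j - real k) / real d = 0" by (rule Ints_nonzero_abs_less1)
  then show "j = k" using jk by simp
qed

lemma sum_e_divide_orthogonal:
  assumes "j < d" "k < d"
  shows "(\<Sum>l<d. (e (real j / real d) * cnj (e (real k / real d))) ^ l)
           = (if j = k then of_nat d else 0)"
proof -
  define q where "q = e (real j / real d) * cnj (e (real k / real d))"
  have q: "q = e ((real j - real k) / real d)"
    unfolding q_def cnj_e by (simp flip: e_add add: diff_divide_distrib)
  have "q ^ d = 1"
    using assms unfolding q e_power by (simp add: e_eq_1_iff)
  moreover have "q = 1 \<longleftrightarrow> e (real j / real d) = e (real k / real d)"
    unfolding q e_eq_1_iff e_eq_iff by (simp add: diff_divide_distrib)
  then have "q = 1 \<longleftrightarrow> j = k"
    using inj_on_e_divide[of d] assms by (metis inj_on_eq_iff lessThan_iff)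
  ultimately show ?thesis unfolding q_def[symmetric] by (cases "j = k") (simp_all add: geometric_sum)
qed

lemma parseval_e_divide:
  fixes c :: "nat \<Rightarrow> complex"
  assumes J: "J \<subseteq> {..<d}"
  shows "(\<Sum>l<d. (cmod (\<Sum>j\<in>J. c j * e (real j / real d) ^ l))\<^sup>2)
     = real d * (\<Sum>j\<in>J. (cmod (c j))\<^sup>2)"
proof -
  define w where "w j = e (real j / real d)" for j
  have "complex_of_real (\<Sum>l<d. (cmod (\<Sum>j\<in>J. c j * w j ^ l))\<^sup>2)
      = (\<Sum>l<d. (\<Sum>j\<in>J. c j * w j ^ l) * cnj (\<Sum>k\<in>J. c k * w k ^ l))"
    by (simp only: of_real_sum complex_norm_square)
  also have "\<dots> = (\<Sum>l<d. \<Sum>j\<in>J. \<Sum>k\<in>J. c j * cnj (c k) * (w j * cnj (w k)) ^ l)"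
    by (simp add: sum_product cnj_sum power_mult_distrib mult_ac)
  also have "\<dots> = (\<Sum>j\<in>J. \<Sum>k\<in>J. c j * cnj (c k) * (\<Sum>l<d. (w j * cnj (w k)) ^ l))"
    by (simp add: sum_distrib_left sum.swap[of _ "{..<d}"])
  also have "\<dots> = (\<Sum>j\<in>J. \<Sum>k\<in>J. c j * cnj (c k) * (if j = k then of_nat d else 0))"
    using J unfolding w_def by (intro sum.cong refl) (simp add: sum_e_divide_orthogonal subset_iff)
  also have "\<dots> = complex_of_real (real d * (\<Sum>j\<in>J. (cmod (c j))\<^sup>2))"
    using finite_subset[OF J]
    by (simp add: if_distrib sum.delta sum_distrib_left mult_ac cong: if_cong)
      (simp flip: complex_norm_square)
  finally show ?thesis unfolding w_def of_real_eq_iff .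
qed

lemma sum_power2_le_bound_mult_sum:
  fixes a :: "'a \<Rightarrow> real"
  assumes "\<forall>j\<in>J. 0 \<le> a j \<and> a j \<le> M"
  shows "(\<Sum>j\<in>J. (a j)\<^sup>2) \<le> M * (\<Sum>j\<in>J. a j)"
proof -
  have "(\<Sum>j\<in>J. (a j)\<^sup>2) \<le> (\<Sum>j\<in>J. M * a j)"
    using assms by (intro sum_mono) (simp add: power2_eq_square mult_right_mono)
  then show ?thesis by (simp add: sum_distrib_left)
qed

definition prime_recip_sum :: "real \<Rightarrow> (nat \<Rightarrow> complex) \<Rightarrow> complex \<Rightarrow> real" where
  "prime_recip_sum x f z = (\<Sum>p\<in>{p. prime p \<and> real p \<le> x \<and> f p = z}. 1 / real p)"

lemma finite_primes_le: "finite {p::nat. prime p \<and> real p \<le> x}"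
  by (rule finite_subset[of _ "{..nat \<lfloor>x\<rfloor>}"]) (auto simp: le_nat_floor)

lemma pdist_power_one_sq_ge:
  assumes Z: "finite Z" and f: "\<forall>p. prime p \<longrightarrow> cmod (f p) \<le> 1"
  shows "(\<Sum>z\<in>Z. (1 - Re (z ^ l)) * prime_recip_sum x f z) \<le> (pdist (\<lambda>n. f n ^ l) (\<lambda>_. 1) x)\<^sup>2"
proof -
  define P where "P = {p. prime p \<and> real p \<le> x}"
  define g where "g p = (1 - Re (f p ^ l)) / real p" for p
  have P: "finite P" unfolding P_def by (rule finite_primes_le)
  have g_nonneg: "0 \<le> g p" if "p \<in> P" for p
  proof -
    have "Re (f p ^ l) \<le> cmod (f p) ^ l" by (metis complex_Re_le_cmod norm_power)
    also have "\<dots> \<le> 1" using f that by (simp add: P_def power_le_one)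
    finally show ?thesis by (simp add: g_def)
  qed
  have "(\<Sum>z\<in>Z. (1 - Re (z ^ l)) * prime_recip_sum x f z)
      = (\<Sum>z\<in>Z. \<Sum>p\<in>{p \<in> {p \<in> P. f p \<in> Z}. f p = z}. g p)"
    using Z unfolding prime_recip_sum_def P_def g_def
    by (intro sum.cong refl) (auto simp: sum_distrib_left intro!: sum.cong)
  also have "\<dots> = (\<Sum>p\<in>{p \<in> P. f p \<in> Z}. g p)"
    using P Z by (intro sum.group) auto
  also have "\<dots> \<le> (\<Sum>p\<in>P. g p)"
    using P g_nonneg by (intro sum_mono2) auto
  also have "\<dots> = (pdist (\<lambda>n. f n ^ l) (\<lambda>_. 1) x)\<^sup>2"
    unfolding pdist_def using g_nonneg by (simp add: sum_nonneg flip: P_def g_def)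
  finally show ?thesis .
qed

lemma classM_norm_le_1:
  assumes "f \<in> classM x0 d" "d > 0" "n > 0"
  shows "cmod (f n) \<le> 1"
proof -
  have "f n ^ d = 1 \<or> f n = 0" using assms by (auto simp: classM_def roots_of_unity_def)
  then show ?thesis using assms(2) power_eq_1_iff[of "f n" d] by auto
qed

lemma card_pdist_power_sq_small_le:
  fixes f :: "nat \<Rightarrow> complex" and d :: nat and x \<epsilon> :: real
  defines "T \<equiv> \<Sum>j=1..d-1. prime_recip_sum x f (e (real j / real d))"
  assumes f: "\<forall>p. prime p \<longrightarrow> cmod (f p) \<le> 1" and "0 \<le> \<epsilon>"
    and small: "\<forall>m\<in>{1..d-1}. prime_recip_sum x f (e (real m / real d)) \<le> \<epsilon> * T"
  shows "real (card {l\<in>{1..d-1}. (pdist (\<lambda>n. f n ^ l) (\<lambda>_. 1) x)\<^sup>2 < 2/3 * T})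
           \<le> 9 * \<epsilon> * real d"
proof -
  define \<sigma> where "\<sigma> j = prime_recip_sum x f (e (real j / real d))" for j
  define S where "S l = (\<Sum>j=1..d-1. complex_of_real (\<sigma> j) * e (real j / real d) ^ l)" for l
  define B where "B = {l\<in>{1..d-1}. (pdist (\<lambda>n. f n ^ l) (\<lambda>_. 1) x)\<^sup>2 < 2/3 * T}"
  have J: "{1..d-1} \<subseteq> {..<d}" by auto
  have \<sigma>_nonneg: "0 \<le> \<sigma> j" for j
    by (simp add: \<sigma>_def prime_recip_sum_def sum_nonneg)
  have T_eq: "T = (\<Sum>j=1..d-1. \<sigma> j)" by (simp add: T_def \<sigma>_def)
  have dist_ge: "T - Re (S l) \<le> (pdist (\<lambda>n. f n ^ l) (\<lambda>_. 1) x)\<^sup>2" for l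
  proof -
    have "T - Re (S l) = (\<Sum>j=1..d-1. (1 - Re (e (real j / real d) ^ l)) * \<sigma> j)"
      by (simp add: T_eq S_def Re_sum algebra_simps sum_subtractf)
    also have "\<dots> = (\<Sum>z\<in>(\<lambda>j. e (real j / real d)) ` {1..d-1}. (1 - Re (z ^ l)) * prime_recip_sum x f z)"
      using inj_on_subset[OF inj_on_e_divide J] by (simp add: sum.reindex \<sigma>_def)
    also have "\<dots> \<le> (pdist (\<lambda>n. f n ^ l) (\<lambda>_. 1) x)\<^sup>2"
      using f by (intro pdist_power_one_sq_ge) auto
    finally show ?thesis .
  qed
  have T_pos: "0 < T" if "l \<in> B" for l
  proof -
    have "(pdist (\<lambda>n. f n ^ l) (\<lambda>_. 1) x)\<^sup>2 < 2/3 * T" using that by (simp add: B_def)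
    then show ?thesis using zero_le_power2[of "pdist (\<lambda>n. f n ^ l) (\<lambda>_. 1) x"] by linarith
  qed
  have S_large: "(T / 3)\<^sup>2 < (cmod (S l))\<^sup>2" if "l \<in> B" for l
  proof -
    have "T / 3 < Re (S l)" using dist_ge[of l] that by (simp add: B_def)
    also have "\<dots> \<le> cmod (S l)" by (rule complex_Re_le_cmod)
    finally show ?thesis using T_pos[OF that] by (intro power_strict_mono) auto
  qed
  have "real (card B) * (T / 3)\<^sup>2 = (\<Sum>l\<in>B. (T / 3)\<^sup>2)" by simp
  also have "\<dots> \<le> (\<Sum>l\<in>B. (cmod (S l))\<^sup>2)" by (intro sum_mono less_imp_le S_large)
  also have "\<dots> \<le> (\<Sum>l<d. (cmod (S l))\<^sup>2)" by (intro sum_mono2) (auto simp: B_def)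
  also have "\<dots> = real d * (\<Sum>j=1..d-1. (\<sigma> j)\<^sup>2)"
    unfolding S_def parseval_e_divide[OF J] by simp
  also have "\<dots> \<le> real d * (\<epsilon> * T * T)"
    using small \<sigma>_nonneg sum_power2_le_bound_mult_sum[of "{1..d-1}" \<sigma> "\<epsilon> * T"]
    by (intro mult_left_mono) (auto simp: \<sigma>_def T_eq)
  finally have "real (card B) * T\<^sup>2 \<le> (9 * \<epsilon> * real d) * T\<^sup>2"
    by (simp add: power2_eq_square field_simps)
  then have "B \<noteq> {} \<Longrightarrow> real (card B) \<le> 9 * \<epsilon> * real d"
    using T_pos by (meson all_not_in_conv mult_le_cancel_right zero_less_power not_le)
  then show ?thesis
    unfolding B_def[symmetric] using \<open>0 \<le> \<epsilon>\<close> by (cases "B = {}") auto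
qed

lemma classM_card_pdist_power_sq_small_le:
  fixes f :: "nat \<Rightarrow> complex" and d :: nat and x0 x \<epsilon> :: real
  defines "T \<equiv> \<Sum>j=1..d-1. prime_recip_sum x f (e (real j / real d))"
  assumes f: "f \<in> classM x0 d" and "0 < d" "0 \<le> \<epsilon>" "\<epsilon> \<le> 1"
    and small: "\<forall>m\<in>{1..d-1}. prime_recip_sum x f (e (real m / real d)) \<le> \<epsilon> * T"
  shows "real (card {l\<in>{1..d-1}. (pdist (\<lambda>n. f n ^ l) (\<lambda>_. 1) x)\<^sup>2
                       < (2/3 - 9 * \<epsilon> powr (1/3)) * T})
           \<le> 9 * \<epsilon> powr (1/3) * real d"
proof -
  have "0 \<le> T" by (simp add: T_def prime_recip_sum_def sum_nonneg)
  then have "(2/3 - 9 * \<epsilon> powr (1/3)) * T \<le> 2/3 * T"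
    by (intro mult_right_mono) auto
  then have "real (card {l\<in>{1..d-1}. (pdist (\<lambda>n. f n ^ l) (\<lambda>_. 1) x)\<^sup>2
                           < (2/3 - 9 * \<epsilon> powr (1/3)) * T})
      \<le> real (card {l\<in>{1..d-1}. (pdist (\<lambda>n. f n ^ l) (\<lambda>_. 1) x)\<^sup>2 < 2/3 * T})"
    by (intro of_nat_mono card_mono) auto
  also have "\<dots> \<le> 9 * \<epsilon> * real d"
    using assms classM_norm_le_1[OF f] prime_gt_0_nat unfolding T_def
    by (intro card_pdist_power_sq_small_le) auto
  also have "\<dots> \<le> 9 * \<epsilon> powr (1/3) * real d"
    using assms powr_mono'[of "1/3" 1 \<epsilon>] by (intro mult_right_mono) auto
  finally show ?thesis .
qed

theorem lemma3p2:
  shows "\<exists>\<epsilon>0 C :: real. 0 < \<epsilon>0 \<and> \<epsilon>0 < 1 \<and> 0 < C \<and>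
    (\<forall>(d::nat) (x0::real) f (x::real) (\<epsilon>::real).
       d \<ge> 2 \<longrightarrow> x0 \<ge> 3 \<longrightarrow> f \<in> classM x0 d \<longrightarrow> 1 \<le> x \<longrightarrow> x \<le> x0 \<longrightarrow>
       0 < \<epsilon> \<longrightarrow> \<epsilon> < \<epsilon>0 \<longrightarrow> \<epsilon> * real (least_prime_factor d) > 1 \<longrightarrow>
       (let \<sigma> = (\<lambda>j::nat. \<Sum>p\<in>{p. prime p \<and> real p \<le> x \<and> f p = e (real j / real d)}. 1 / real p)
        in (\<forall>m\<in>{1..d-1}. \<sigma> m < \<epsilon> * (\<Sum>j=1..d-1. \<sigma> j)) \<longrightarrow>
           real (card {l\<in>{1..d-1}.
              (pdist (\<lambda>n. f n ^ l) (\<lambda>_. 1) x)\<^sup>2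
                < (2/3 - C * \<epsilon> powr (1/3)) * (\<Sum>j=1..d-1. \<sigma> j)})
             \<le> C * \<epsilon> powr (1/3) * real d))"
  unfolding Let_def prime_recip_sum_def[symmetric]
  by (rule exI[of _ "1/2"], rule exI[of _ 9], intro conjI allI impI classM_card_pdist_power_sq_small_le)
    (auto intro: less_imp_le)

end
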